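(* Knowledge of the joining pairs alone does not determine the subtrajectory join result; that is, the breaking points are necessary. Precisely: there exist parameters $\epsilon_{sp}>0$, $\epsilon_t\ge 0$, $\delta t$ and two inputs $(R,S)$ and $(R',S')$ of the subtrajectory join such that the sets of joining pairs $JP(R,S)$ and $JP(R',S')$ are equal, but the sets of maximally matching pairs of subtrajectories returned by the subtrajectory join on $(R,S)$ and on $(R',S')$ are different (the second input differing from the first by an additional point of a trajectory that is a breaking point).
   Context: A trajectory $r$ is a finite sequence of timestamped planar points $r_1,\dots,r_N$, $r_i=(x_i,y_i,t_i)$, with increasing timestamps; a subtrajectory $r_{i,j}$ ($i<j$) is the contiguous subsequence $r_i,\dots,r_j$. $DistS$ is the Euclidean distance of the $(x,y)$ coordinates and $DistT(r_i,s_j)=|r_i.t-s_j.t|$. For (sub)trajectories $r=r_1..r_N$ and $s=s_1..s_M$ the common lifespan duration is $\Delta w_{r,s}=\min(r_N.t,s_M.t)-\max(r_1.t,s_1.t)$. Given a spatial threshold $\epsilon_{sp}$, temporal tolerance $\epsilon_t$ and duration $\delta t$, a pair of subtrajectories $(r',s')$ is matching iff $\Delta w_{r',s'}\ge \delta t-2\epsilon_t$, every point of $r'$ has some point of $s'$ within spatial distance $\epsilon_{sp}$ and temporal distance $\epsilon_t$, and every point of $s'$ has some point of $r'$ within these distances. A matching pair $(r',s')$ with $r'$ a subtrajectory of $r$ and $s'$ of $s$ is maximally matching iff there is no subtrajectory $r''\supsetneq r'$ of $r$ or $s''\supsetneq s'$ of $s$ such that $(r'',s')$, $(r',s'')$ or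 $(r'',s'')$ is matching. For two sets of trajectories $R,S$, the subtrajectory join returns all maximally matching pairs $(r',s')$ with $r'$ a subtrajectory of some $r\in R$ and $s'$ of some $s\in S$. A joining pair is a pair of points $(r_i,s_j)$, $r_i$ a point of a trajectory in $R$, $s_j$ a point of a trajectory in $S$, with $DistS(r_i,s_j)\le\epsilon_{sp}$ and $DistT(r_i,s_j)\le\epsilon_t$; $JP(R,S)$ is the set of joining pairs. A point is a breaking point if it belongs to no joining pair. *)

theory Defs
  imports Main "HOL-Library.Sublist" Complex_Main
begin

type_synonym tpoint = "real \<times> real \<times> real"

definition px :: "tpoint \<Rightarrow> real" where "px p = fst p"
definition py :: "tpoint \<Rightarrow> real" where "py p = fst (snd p)"
definition pt :: "tpoint \<Rightarrow> real" where "pt p = snd (snd p)"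

type_synonym traj = "tpoint list"

definition is_traj :: "traj \<Rightarrow> bool" where
  "is_traj r \<longleftrightarrow> r \<noteq> [] \<and> sorted_wrt (\<lambda>p q. pt p < pt q) r"

definition DistS :: "tpoint \<Rightarrow> tpoint \<Rightarrow> real" where
  "DistS p q = sqrt ((px p - px q)\<^sup>2 + (py p - py q)\<^sup>2)"

definition DistT :: "tpoint \<Rightarrow> tpoint \<Rightarrow> real" where
  "DistT p q = \<bar>pt p - pt q\<bar>"

definition subtraj :: "traj \<Rightarrow> traj \<Rightarrow> bool" where
  "subtraj r' r \<longleftrightarrow> (\<exists>i j. i < j \<and> j < length r \<and> r' = take (j - i + 1) (drop i r))"

definition lifespan :: "traj \<Rightarrow> traj \<Rightarrow> real" where
  "lifespan r s = min (pt (last r)) (pt (last s)) - max (pt (hd r)) (pt (hd s))"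

definition close_pts :: "real \<Rightarrow> real \<Rightarrow> tpoint \<Rightarrow> tpoint \<Rightarrow> bool" where
  "close_pts esp et p q \<longleftrightarrow> DistS p q \<le> esp \<and> DistT p q \<le> et"

definition matching :: "real \<Rightarrow> real \<Rightarrow> real \<Rightarrow> traj \<Rightarrow> traj \<Rightarrow> bool" where
  "matching esp et dt r s \<longleftrightarrow>
     lifespan r s \<ge> dt - 2 * et \<and>
     (\<forall>p\<in>set r. \<exists>q\<in>set s. close_pts esp et p q) \<and>
     (\<forall>q\<in>set s. \<exists>p\<in>set r. close_pts esp et p q)"

definition strict_super :: "traj \<Rightarrow> traj \<Rightarrow> traj \<Rightarrow> bool" where
  "strict_super r'' r' r \<longleftrightarrow> subtraj r'' r \<and> sublist r' r'' \<and> r'' \<noteq> r'"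

definition max_matching :: "real \<Rightarrow> real \<Rightarrow> real \<Rightarrow> traj \<Rightarrow> traj \<Rightarrow> traj \<Rightarrow> traj \<Rightarrow> bool" where
  "max_matching esp et dt r s r' s' \<longleftrightarrow>
     subtraj r' r \<and> subtraj s' s \<and> matching esp et dt r' s' \<and>
     \<not> (\<exists>r''. strict_super r'' r' r \<and> matching esp et dt r'' s') \<and>
     \<not> (\<exists>s''. strict_super s'' s' s \<and> matching esp et dt r' s'') \<and>
     \<not> (\<exists>r'' s''. strict_super r'' r' r \<and> strict_super s'' s' s \<and> matching esp et dt r'' s'')"

definition subtraj_join :: "real \<Rightarrow> real \<Rightarrow> real \<Rightarrow> traj set \<Rightarrow> traj set \<Rightarrow> (traj \<times> traj) set" where
  "subtraj_join esp et dt R S =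
     {(r', s'). \<exists>r\<in>R. \<exists>s\<in>S. max_matching esp et dt r s r' s'}"

definition JP :: "real \<Rightarrow> real \<Rightarrow> traj set \<Rightarrow> traj set \<Rightarrow> (tpoint \<times> tpoint) set" where
  "JP esp et R S =
     {(p, q). (\<exists>r\<in>R. p \<in> set r) \<and> (\<exists>s\<in>S. q \<in> set s) \<and> close_pts esp et p q}"

definition valid_input :: "traj set \<Rightarrow> bool" where
  "valid_input R \<longleftrightarrow> finite R \<and> (\<forall>r\<in>R. is_traj r)"

definition breaking_point :: "real \<Rightarrow> real \<Rightarrow> traj set \<Rightarrow> traj set \<Rightarrow> tpoint \<Rightarrow> bool" where
  "breaking_point esp et R S p \<longleftrightarrow>
     ((\<exists>r\<in>R. p \<in> set r) \<or> (\<exists>s\<in>S. p \<in> set s)) \<and>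
     (\<forall>a b. (a, b) \<in> JP esp et R S \<longrightarrow> a \<noteq> p \<and> b \<noteq> p)"

definition add_point :: "traj set \<Rightarrow> traj set \<Rightarrow> tpoint \<Rightarrow> bool" where
  "add_point T T' p \<longleftrightarrow>
     (\<exists>r\<in>T. \<exists>k\<le>length r. T' = insert (take k r @ p # drop k r) (T - {r}))"

end

theory Submission
  imports Defs
begin

text \<open>Take R = S = {[a, b]} and insert between a and b a point c whose timestamp differs
  from those of a and b, with temporal tolerance 0. Then c joins with nothing, so the joining
  pairs are unchanged; but [a, b] matches itself and is maximal, while after the insertion it
  is no longer a subtrajectory of [a, c, b].\<close>

lemma subtraj_imp_sublist: "subtraj r' r \<Longrightarrow> sublist r' r"
  unfolding subtraj_def
  by (auto intro: sublist_take[THEN sublist_order.order.trans])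

lemma subtraj_self: "length r \<ge> 2 \<Longrightarrow> subtraj r r"
  unfolding subtraj_def
  by (rule exI[of _ 0], rule exI[of _ "length r - 1"]) auto

lemma not_strict_super_self: "\<not> strict_super r'' r r"
  unfolding strict_super_def using subtraj_imp_sublist sublist_order.order.antisym by blast

lemma max_matching_whole:
  assumes "length r \<ge> 2" and "length s \<ge> 2" and "matching esp et dt r s"
  shows "max_matching esp et dt r s r s"
  using assms subtraj_self not_strict_super_self unfolding max_matching_def by blast

lemma JP_eq_if_new_point_far:
  assumes far: "\<forall>s\<in>S. \<forall>q\<in>set s. \<not> close_pts esp et p q"
    and points: "\<And>x. (\<exists>r\<in>R'. x \<in> set r) \<longleftrightarrow> x = p \<or> (\<exists>r\<in>R. x \<in> set r)"
  shows "JP esp et R' S = JP esp et R S"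
proof -
  have "(\<exists>r\<in>R'. x \<in> set r) \<longleftrightarrow> (\<exists>r\<in>R. x \<in> set r)"
    if "s \<in> S" "q \<in> set s" "close_pts esp et x q" for x q s
  proof -
    have "x \<noteq> p" using that far by blast
    then show ?thesis using points[of x] by simp
  qed
  then show ?thesis
    unfolding JP_def by blast
qed

lemma breaking_point_if_far:
  assumes "r \<in> R" and "p \<in> set r"
    and "\<forall>s\<in>S. \<forall>q\<in>set s. \<not> close_pts esp et p q \<and> q \<noteq> p"
  shows "breaking_point esp et R S p"
  unfolding breaking_point_def JP_def using assms by blast

theorem lemma1:
  shows "\<exists>esp et dt R S R' S'.
           esp > 0 \<and> et \<ge> 0 \<and>
           valid_input R \<and> valid_input S \<and> valid_input R' \<and> valid_input S' \<and>
           JP esp et R S = JP esp et R' S' \<and>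
           subtraj_join esp et dt R S \<noteq> subtraj_join esp et dt R' S' \<and>
           (\<exists>p. breaking_point esp et R' S' p \<and>
                ((add_point R R' p \<and> S' = S) \<or> (R' = R \<and> add_point S S' p)))"
proof -
  define a :: tpoint where "a = (0, 0, 0)"
  define b :: tpoint where "b = (0, 0, 1)"
  define c :: tpoint where "c = (0, 0, 1/2)"
  have distinct: "a \<noteq> b" "c \<noteq> a" "c \<noteq> b" by (simp_all add: a_def b_def c_def)
  have c_far: "\<forall>s\<in>{[a, b]}. \<forall>q\<in>set s. \<not> close_pts 1 0 c q \<and> q \<noteq> c"
    by (auto simp: close_pts_def DistT_def a_def b_def c_def pt_def)
  have valid: "valid_input {[a, b]}" "valid_input {[a, c, b]}"
    by (auto simp: valid_input_def is_traj_def a_def b_def c_def pt_def)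
  have JP_eq: "JP 1 0 {[a, b]} {[a, b]} = JP 1 0 {[a, c, b]} {[a, b]}"
    by (rule JP_eq_if_new_point_far[symmetric]) (use c_far in auto)
  have "matching 1 0 0 [a, b] [a, b]"
    by (auto simp: matching_def lifespan_def close_pts_def DistS_def DistT_def a_def b_def pt_def)
  then have joined: "([a, b], [a, b]) \<in> subtraj_join 1 0 0 {[a, b]} {[a, b]}"
    unfolding subtraj_join_def using max_matching_whole by simp
  have "\<not> sublist [a, b] [a, c, b]"
    using distinct by (simp add: sublist_Cons_right)
  then have "\<not> subtraj [a, b] [a, c, b]"
    using subtraj_imp_sublist by blast
  then have not_joined: "([a, b], [a, b]) \<notin> subtraj_join 1 0 0 {[a, c, b]} {[a, b]}"
    unfolding subtraj_join_def max_matching_def by auto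
  from joined not_joined
  have join_differs: "subtraj_join 1 0 0 {[a, b]} {[a, b]} \<noteq> subtraj_join 1 0 0 {[a, c, b]} {[a, b]}"
    by blast
  have breaking: "breaking_point 1 0 {[a, c, b]} {[a, b]} c"
    by (rule breaking_point_if_far) (use c_far in auto)
  have added: "add_point {[a, b]} {[a, c, b]} c"
    unfolding add_point_def by (rule bexI[of _ "[a, b]"], rule exI[of _ 1]) auto
  show ?thesis
    by (rule exI[of _ 1], rule exI[of _ 0], rule exI[of _ 0],
        rule exI[of _ "{[a, b]}"], rule exI[of _ "{[a, b]}"],
        rule exI[of _ "{[a, c, b]}"], rule exI[of _ "{[a, b]}"])
      (intro conjI exI[of _ c]; simp add: valid JP_eq join_differs breaking added)
qed

end
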